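(* Let $f:\mathbb{R}^n\times\mathbb{R}\to\mathbb{R}$ be continuously differentiable with $f(a,b)=0$ and $\partial_y f(a,b)\ne0$. If the implicit function $y=g(x)$ with $f(x,g(x))=0$ near $(a,b)$ is a polynomial, then there is a rectangle $R=\prod_{k=1}^n[\xi_k,\eta_k]\ni a$ and a compact interval $I\ni b$ such that $f$ satisfies Assumption 1 on $R\times I$ and, for any $N=(N_1,\dots,N_n)$ with $N_k$ larger than the largest exponent of $x_k$ in $g$, $$g(x)=\sum_{0\le\beta\le N-1}c_\beta(x-a)^\beta,\qquad c_\beta=\prod_{k=1}^n(\beta_k+1)\sum_{1\le\alpha\le N}\prod_{k=1}^n\big(V_{N_k}^{-1}\big)_{\beta_k+1,\alpha_k}\,d_\alpha .$$
   Context: Multi-index notation: $\alpha\le\beta$ componentwise, $(x-a)^\beta=\prod_k(x_k-a_k)^{\beta_k}$. $\operatorname{sign}_y f(x,y)=1$ if $f(x,y)\ge0$ and $-1$ otherwise; $\Theta_y f(x,y)=1$ if $f(x,y)\ge0$ and $0$ otherwise. Assumption 1 on $R\times I$: for every $x\in R$, $y\mapsto\operatorname{sign}_y f(x,y)$ has exactly one jump discontinuity on $I$. $n_y(f)\in\{1,-1\}$ is $1$ if $y\mapsto\operatorname{sign}_y f(x,y)$ is increasing on $I$ and $-1$ if decreasing (constant on $R$). $\Delta_k=(\eta_k-\xi_k)/N_k$; $R_\alpha=\prod_{k}[\xi_k+(\alpha_k-1)\Delta_k,\xi_k+\alpha_k\Delta_k]$ for $1\le\alpha\le N$; $V_{N_k}$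 is the $N_k\times N_k$ matrix with $(\alpha_k,j)$ entry $(\xi_k+\alpha_k\Delta_k-a_k)^j-(\xi_k+(\alpha_k-1)\Delta_k-a_k)^j$; $d_\alpha=\frac{1+n_y(f)}{2}|R_\alpha|\max I+\frac{1-n_y(f)}{2}|R_\alpha|\min I-n_y(f)\iint_{R_\alpha\times I}\Theta_y f\,dx\,dy$. *)

theory Defs
  imports "HOL-Analysis.Analysis"
begin

definition sign_y :: "('x \<Rightarrow> real \<Rightarrow> real) \<Rightarrow> 'x \<Rightarrow> real \<Rightarrow> real" where
  "sign_y f x y = (if f x y \<ge> 0 then 1 else -1)"

definition Theta_y :: "('x \<Rightarrow> real \<Rightarrow> real) \<Rightarrow> 'x \<Rightarrow> real \<Rightarrow> real" where
  "Theta_y f x y = (if f x y \<ge> 0 then 1 else 0)"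

definition one_jump_on :: "(real \<Rightarrow> real) \<Rightarrow> real set \<Rightarrow> bool" where
  "one_jump_on s I \<longleftrightarrow> (\<exists>!c. c \<in> I \<and> \<not> continuous (at c within I) s) \<and>
     (\<forall>c\<in>I. \<not> continuous (at c within I) s \<longrightarrow>
        c \<in> interior I \<and>
        (\<exists>L R. (s \<longlongrightarrow> L) (at_left c) \<and> (s \<longlongrightarrow> R) (at_right c) \<and> L \<noteq> R))"

definition assumption1 :: "('x \<Rightarrow> real \<Rightarrow> real) \<Rightarrow> 'x set \<Rightarrow> real set \<Rightarrow> bool" where
  "assumption1 f R I \<longleftrightarrow> (\<forall>x\<in>R. one_jump_on (sign_y f x) I)"

text \<open>n_y(f) at the point x: 1 if y \<mapsto> sign_y f x y is increasing on I, -1 otherwise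
  (under Assumption 1 it is then decreasing).\<close>
definition n_y :: "('x \<Rightarrow> real \<Rightarrow> real) \<Rightarrow> real set \<Rightarrow> 'x \<Rightarrow> real" where
  "n_y f I x = (if mono_on I (sign_y f x) then 1 else -1)"

definition inv_matN :: "nat \<Rightarrow> (nat \<Rightarrow> nat \<Rightarrow> real) \<Rightarrow> (nat \<Rightarrow> nat \<Rightarrow> real)" where
  "inv_matN m V = (THE W.
     (\<forall>i\<in>{1..m}. \<forall>j\<in>{1..m}. (\<Sum>l=1..m. W i l * V l j) = (if i = j then 1 else 0)) \<and>
     (\<forall>i\<in>{1..m}. \<forall>j\<in>{1..m}. (\<Sum>l=1..m. V i l * W l j) = (if i = j then 1 else 0)) \<and>
     (\<forall>i j. i \<notin> {1..m} \<or> j \<notin> {1..m} \<longrightarrow> W i j = 0))"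

definition poly_eval :: "(('n::finite \<Rightarrow> nat) \<Rightarrow> real) \<Rightarrow> real^'n \<Rightarrow> real" where
  "poly_eval p x = (\<Sum>\<beta>\<in>{\<beta>. p \<beta> \<noteq> 0}. p \<beta> * (\<Prod>k\<in>UNIV. (x $ k) ^ \<beta> k))"

definition deg_in :: "(('n::finite \<Rightarrow> nat) \<Rightarrow> real) \<Rightarrow> 'n \<Rightarrow> nat" where
  "deg_in p k = Max (insert 0 {\<beta> k | \<beta>. p \<beta> \<noteq> 0})"

definition Delta :: "real^'n \<Rightarrow> real^'n \<Rightarrow> ('n \<Rightarrow> nat) \<Rightarrow> 'n \<Rightarrow> real" where
  "Delta \<xi> \<eta> N k = (\<eta> $ k - \<xi> $ k) / real (N k)"

definition R_alpha :: "real^'n \<Rightarrow> real^'n \<Rightarrow> ('n \<Rightarrow> nat) \<Rightarrow> ('n \<Rightarrow> nat) \<Rightarrow> (real^'n) set" where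
  "R_alpha \<xi> \<eta> N \<alpha> = cbox (\<chi> k. \<xi> $ k + (real (\<alpha> k) - 1) * Delta \<xi> \<eta> N k)
                            (\<chi> k. \<xi> $ k + real (\<alpha> k) * Delta \<xi> \<eta> N k)"

definition V_mat :: "real^'n \<Rightarrow> real^'n \<Rightarrow> real^'n \<Rightarrow> ('n \<Rightarrow> nat) \<Rightarrow> 'n \<Rightarrow> nat \<Rightarrow> nat \<Rightarrow> real" where
  "V_mat a \<xi> \<eta> N k i j =
     (if i \<in> {1..N k} \<and> j \<in> {1..N k} then
        (\<xi> $ k + real i * Delta \<xi> \<eta> N k - a $ k) ^ j
        - (\<xi> $ k + (real i - 1) * Delta \<xi> \<eta> N k - a $ k) ^ j
      else 0)"

definition d_alpha :: "(real^'n \<Rightarrow> real \<Rightarrow> real) \<Rightarrow> real \<Rightarrow> real set \<Rightarrow> real^'n \<Rightarrow> real^'n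
     \<Rightarrow> ('n \<Rightarrow> nat) \<Rightarrow> ('n \<Rightarrow> nat) \<Rightarrow> real" where
  "d_alpha f \<nu> I \<xi> \<eta> N \<alpha> =
     (1 + \<nu>) / 2 * (\<Prod>k\<in>UNIV. Delta \<xi> \<eta> N k) * Sup I
     + (1 - \<nu>) / 2 * (\<Prod>k\<in>UNIV. Delta \<xi> \<eta> N k) * Inf I
     - \<nu> * integral (R_alpha \<xi> \<eta> N \<alpha> \<times> I) (\<lambda>z. Theta_y f (fst z) (snd z))"

definition c_beta :: "(real^'n \<Rightarrow> real \<Rightarrow> real) \<Rightarrow> real \<Rightarrow> real set \<Rightarrow> real^'n \<Rightarrow> real^'n \<Rightarrow> real^'n
     \<Rightarrow> ('n \<Rightarrow> nat) \<Rightarrow> ('n \<Rightarrow> nat) \<Rightarrow> real" where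
  "c_beta f \<nu> I a \<xi> \<eta> N \<beta> =
     (\<Prod>k\<in>UNIV. real (\<beta> k + 1)) *
     (\<Sum>\<alpha>\<in>{\<alpha>. \<forall>k. 1 \<le> \<alpha> k \<and> \<alpha> k \<le> N k}.
        (\<Prod>k\<in>UNIV. inv_matN (N k) (V_mat a \<xi> \<eta> N k) (\<beta> k + 1) (\<alpha> k)) * d_alpha f \<nu> I \<xi> \<eta> N \<alpha>)"

end

theory Submission
  imports Defs "Jordan_Normal_Form.Determinant" "HOL-Computational_Algebra.Polynomial"
begin

(* Near (a, b) the partial derivative of f in y keeps its sign, so on a small box R times [r, s]
   the sign of f(x, .) switches exactly once, at y = g(x), and always in the same direction.
   Hence Theta_y f is the indicator of the region above (or below) the graph of g, and d_alpha
   is the integral of g over the cell R_alpha. Expanding g in powers of (x - a), the integral of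
   (x - a)^gamma over R_alpha is the product of the entries V_{N_k}(alpha_k, gamma_k + 1) divided
   by the product of the gamma_k + 1. The matrices V_{N_k} are invertible because the grid points
   are distinct, so applying their inverses to the d_alpha recovers the Taylor coefficients of g
   at a, which is what the c_beta compute. *)

lemma left_inverse_eq_right_inverse:
  fixes L R V :: "nat \<Rightarrow> nat \<Rightarrow> 'a::comm_ring_1"
  assumes left: "\<forall>i\<in>{1..m}. \<forall>j\<in>{1..m}. (\<Sum>l=1..m. L i l * V l j) = (if i = j then 1 else 0)"
    and right: "\<forall>i\<in>{1..m}. \<forall>j\<in>{1..m}. (\<Sum>l=1..m. V i l * R l j) = (if i = j then 1 else 0)"
    and ij: "i \<in> {1..m}" "j \<in> {1..m}"
  shows "L i j = R i j"
proof -
  have "L i j = (\<Sum>l=1..m. if l = j then L i l else 0)"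
    using ij by (simp add: sum.delta')
  also have "\<dots> = (\<Sum>l=1..m. L i l * (\<Sum>q=1..m. V l q * R q j))"
    using right ij by (intro sum.cong refl) auto
  also have "\<dots> = (\<Sum>q=1..m. (\<Sum>l=1..m. L i l * V l q) * R q j)"
    by (simp add: sum_distrib_left sum_distrib_right mult.assoc) (rule sum.swap)
  also have "\<dots> = (\<Sum>q=1..m. if i = q then R q j else 0)"
    using left ij by (intro sum.cong refl) auto
  also have "\<dots> = R i j"
    using ij by (simp add: sum.delta)
  finally show ?thesis .
qed

lemma inv_matN_eqI:
  fixes V W :: "nat \<Rightarrow> nat \<Rightarrow> real"
  assumes left: "\<forall>i\<in>{1..m}. \<forall>j\<in>{1..m}. (\<Sum>l=1..m. W i l * V l j) = (if i = j then 1 else 0)"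
    and right: "\<forall>i\<in>{1..m}. \<forall>j\<in>{1..m}. (\<Sum>l=1..m. V i l * W l j) = (if i = j then 1 else 0)"
    and outside: "\<forall>i j. i \<notin> {1..m} \<or> j \<notin> {1..m} \<longrightarrow> W i j = 0"
  shows "inv_matN m V = W"
  unfolding inv_matN_def
proof (rule the_equality)
  fix W' :: "nat \<Rightarrow> nat \<Rightarrow> real"
  assume W': "(\<forall>i\<in>{1..m}. \<forall>j\<in>{1..m}. (\<Sum>l=1..m. W' i l * V l j) = (if i = j then 1 else 0)) \<and>
    (\<forall>i\<in>{1..m}. \<forall>j\<in>{1..m}. (\<Sum>l=1..m. V i l * W' l j) = (if i = j then 1 else 0)) \<and>
    (\<forall>i j. i \<notin> {1..m} \<or> j \<notin> {1..m} \<longrightarrow> W' i j = 0)"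
  show "W' = W"
  proof (intro ext)
    fix i j
    show "W' i j = W i j"
    proof (cases "i \<in> {1..m} \<and> j \<in> {1..m}")
      case True
      then show ?thesis
        using left_inverse_eq_right_inverse[of m W' V W i j] W' right by blast
    next
      case False
      then show ?thesis
        using W' outside by simp
    qed
  qed
qed (use assms in blast)

lemma index_mult_mat_from_1:
  assumes "A \<in> carrier_mat m m" "B \<in> carrier_mat m m" "i \<in> {1..m}" "j \<in> {1..m}"
  shows "(A * B) $$ (i - 1, j - 1) = (\<Sum>l=1..m. A $$ (i - 1, l - 1) * B $$ (l - 1, j - 1))"
  using assms by (auto simp: scalar_prod_def sum.atLeast1_atMost_eq atLeast0LessThan intro!: sum.cong)

lemma det_mat_from_1_nonzero:
  fixes V :: "nat \<Rightarrow> nat \<Rightarrow> 'a::idom"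
  assumes ker: "\<And>c. \<forall>i\<in>{1..m}. (\<Sum>j=1..m. V i j * c j) = 0 \<Longrightarrow> \<forall>j\<in>{1..m}. c j = 0"
  shows "det (mat m m (\<lambda>(i, j). V (Suc i) (Suc j))) \<noteq> 0"
proof
  let ?A = "mat m m (\<lambda>(i, j). V (Suc i) (Suc j))"
  assume "det ?A = 0"
  then obtain v where v: "v \<in> carrier_vec m" "v \<noteq> 0\<^sub>v m" "?A *\<^sub>v v = 0\<^sub>v m"
    using det_0_iff_vec_prod_zero[of ?A m] by auto
  define c where "c j = (if j \<in> {1..m} then v $ (j - 1) else 0)" for j
  have "\<forall>i\<in>{1..m}. (\<Sum>j=1..m. V i j * c j) = 0"
  proof
    fix i assume i: "i \<in> {1..m}"
    have "(\<Sum>j=1..m. V i j * c j) = (?A *\<^sub>v v) $ (i - 1)"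
      using i v(1) by (auto simp: c_def scalar_prod_def sum.atLeast1_atMost_eq atLeast0LessThan
          intro!: sum.cong)
    then show "(\<Sum>j=1..m. V i j * c j) = 0"
      using i v(3) by auto
  qed
  then have "\<forall>j\<in>{1..m}. c j = 0"
    by (rule ker)
  then have "v = 0\<^sub>v m"
    using v(1) by (intro eq_vecI) (auto simp: c_def dest!: bspec[of _ _ "Suc _"])
  with v(2) show False
    by simp
qed

lemma inv_matN_left_inverse:
  fixes V :: "nat \<Rightarrow> nat \<Rightarrow> real"
  assumes ker: "\<And>c. \<forall>i\<in>{1..m}. (\<Sum>j=1..m. V i j * c j) = 0 \<Longrightarrow> \<forall>j\<in>{1..m}. c j = 0"
  shows "\<forall>i\<in>{1..m}. \<forall>j\<in>{1..m}. (\<Sum>l=1..m. inv_matN m V i l * V l j) = (if i = j then 1 else 0)"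
proof -
  define A where "A = mat m m (\<lambda>(i, j). V (Suc i) (Suc j))"
  have A: "A \<in> carrier_mat m m"
    by (simp add: A_def)
  have "A \<in> Units (ring_mat TYPE(real) m ())"
    using det_non_zero_imp_unit[OF A] det_mat_from_1_nonzero[OF ker] by (simp add: A_def)
  then obtain B where B: "B \<in> carrier_mat m m" "B * A = 1\<^sub>m m" "A * B = 1\<^sub>m m"
    by (auto simp: Units_def ring_mat_def)
  define W where "W i j = (if i \<in> {1..m} \<and> j \<in> {1..m} then B $$ (i - 1, j - 1) else 0)" for i j
  have VA: "V i j = A $$ (i - 1, j - 1)" if "i \<in> {1..m}" "j \<in> {1..m}" for i j
  proof -
    have "i - 1 < m" "j - 1 < m" "Suc (i - 1) = i" "Suc (j - 1) = j"
      using that by auto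
    then show ?thesis
      by (simp add: A_def)
  qed
  have WV: "(\<Sum>l=1..m. W i l * V l j) = (B * A) $$ (i - 1, j - 1)"
    and VW: "(\<Sum>l=1..m. V i l * W l j) = (A * B) $$ (i - 1, j - 1)"
    if "i \<in> {1..m}" "j \<in> {1..m}" for i j
    unfolding index_mult_mat_from_1[OF B(1) A that] index_mult_mat_from_1[OF A B(1) that]
    using that by (auto simp: W_def VA intro!: sum.cong)
  then have "inv_matN m V = W"
    using B(2,3) by (intro inv_matN_eqI) (auto simp: WV VW W_def)
  then show ?thesis
    using WV B(2) by auto
qed

no_notation Matrix.vec_index (infixl "$" 100)
no_notation Matrix.scalar_prod (infix "\<bullet>" 70)

(* The i-th equation says q(t i) = q(t (i - 1)) for q = sum_j c_j X^j, so q is constant on the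
   m + 1 distinct points t 0, ..., t m; having degree at most m, q is a constant. *)
lemma difference_vandermonde_kernel:
  fixes t c :: "nat \<Rightarrow> 'a::idom"
  assumes inj: "inj_on t {0..m}"
    and ker: "\<forall>i\<in>{1..m}. (\<Sum>j=1..m. (t i ^ j - t (i - 1) ^ j) * c j) = 0"
  shows "\<forall>j\<in>{1..m}. c j = 0"
proof -
  define q where "q = (\<Sum>j=1..m. monom (c j) j)"
  have coeff_q: "coeff q j = (if j \<in> {1..m} then c j else 0)" for j
    by (simp add: q_def coeff_sum coeff_monom)
  have poly_q: "poly q x = (\<Sum>j=1..m. x ^ j * c j)" for x
    by (simp add: q_def poly_sum poly_monom mult.commute)
  have step: "poly q (t i) = poly q (t (i - 1))" if "i \<in> {1..m}" for i
  proof -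
    have "poly q (t i) - poly q (t (i - 1)) = (\<Sum>j=1..m. (t i ^ j - t (i - 1) ^ j) * c j)"
      by (simp add: poly_q left_diff_distrib sum_subtractf)
    with ker that show ?thesis
      by simp
  qed
  have const: "poly q (t i) = poly q (t 0)" if "i \<le> m" for i
    using that
  proof (induction i)
    case (Suc i)
    then show ?case
      using step[of "Suc i"] by simp
  qed simp
  have q_const: "q = [:poly q (t 0):]"
  proof (rule poly_eqI_degree)
    show "poly q x = poly [:poly q (t 0):] x" if x: "x \<in> t ` {0..m}" for x
    proof -
      obtain i where "i \<le> m" "x = t i"
        using x by auto
      then show ?thesis
        using const[of i] by simp
    qed
    have "degree q \<le> m"
      by (rule degree_le) (auto simp: coeff_q)
    then show "degree q < card (t ` {0..m})"
      using inj by (simp add: card_image)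
  qed (use inj in \<open>simp add: card_image\<close>)
  show ?thesis
  proof
    fix j assume j: "j \<in> {1..m}"
    then obtain j' where "j = Suc j'"
      by (cases j) auto
    then have "coeff q j = 0"
      by (subst q_const) simp
    then show "c j = 0"
      using coeff_q j by simp
  qed
qed

lemma inv_matN_V_mat:
  fixes a \<xi> \<eta> :: "real^'n"
  assumes lt: "\<xi> $ k < \<eta> $ k" and ij: "i \<in> {1..N k}" "j \<in> {1..N k}"
  shows "(\<Sum>l=1..N k. inv_matN (N k) (V_mat a \<xi> \<eta> N k) i l * V_mat a \<xi> \<eta> N k l j)
    = (if i = j then 1 else 0)"
proof -
  define t where "t i = \<xi> $ k + real i * Delta \<xi> \<eta> N k - a $ k" for i :: nat
  have "Delta \<xi> \<eta> N k > 0"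
    using lt ij by (simp add: Delta_def)
  then have inj: "inj_on t {0..N k}"
    by (auto simp: t_def inj_on_def)
  have V: "V_mat a \<xi> \<eta> N k i j = t i ^ j - t (i - 1) ^ j" if "i \<in> {1..N k}" "j \<in> {1..N k}" for i j
    using that by (simp add: V_mat_def t_def of_nat_diff)
  have "\<forall>j\<in>{1..N k}. c j = 0"
    if "\<forall>i\<in>{1..N k}. (\<Sum>j=1..N k. V_mat a \<xi> \<eta> N k i j * c j) = 0" for c
    using difference_vandermonde_kernel[OF inj, of c] that by (simp add: V)
  then show ?thesis
    using inv_matN_left_inverse ij by blast
qed

lemma Collect_all_mem_eq_PiE: "{\<gamma>. \<forall>k. \<gamma> k \<in> S k} = PiE UNIV S"
  by (auto simp: PiE_def Pi_def extensional_def)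

lemma sum_prod_left_inverse:
  fixes W V :: "'n::finite \<Rightarrow> nat \<Rightarrow> nat \<Rightarrow> 'a::comm_ring_1"
  assumes inv: "\<And>k i j. i \<in> {1..m k} \<Longrightarrow> j \<in> {1..m k} \<Longrightarrow>
      (\<Sum>l=1..m k. W k i l * V k l j) = (if i = j then 1 else 0)"
    and \<beta>: "\<forall>k. \<beta> k \<in> {1..m k}" and \<gamma>: "\<forall>k. \<gamma> k \<in> {1..m k}"
  shows "(\<Sum>\<alpha>\<in>{\<alpha>. \<forall>k. \<alpha> k \<in> {1..m k}}. \<Prod>k\<in>UNIV. W k (\<beta> k) (\<alpha> k) * V k (\<alpha> k) (\<gamma> k))
    = (if \<beta> = \<gamma> then 1 else 0)"
proof -
  have "(\<Sum>\<alpha>\<in>{\<alpha>. \<forall>k. \<alpha> k \<in> {1..m k}}. \<Prod>k\<in>UNIV. W k (\<beta> k) (\<alpha> k) * V k (\<alpha> k) (\<gamma> k))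
      = (\<Prod>k\<in>UNIV. \<Sum>l=1..m k. W k (\<beta> k) l * V k l (\<gamma> k))"
    unfolding Collect_all_mem_eq_PiE by (simp add: prod_sum_PiE)
  also have "\<dots> = (\<Prod>k\<in>UNIV. if \<beta> k = \<gamma> k then 1 else 0)"
    using \<beta> \<gamma> inv by (intro prod.cong) auto
  also have "\<dots> = (if \<beta> = \<gamma> then 1 else 0)"
  proof (cases "\<beta> = \<gamma>")
    case False
    then obtain k where "\<beta> k \<noteq> \<gamma> k"
      by auto
    then have "(\<Prod>k\<in>UNIV. if \<beta> k = \<gamma> k then 1 else 0) = (0::'a)"
      by (intro prod_zero) auto
    then show ?thesis
      using False by simp
  qed simp
  finally show ?thesis .
qed

lemma integral_lborel_prod_Basis:
  fixes f :: "'a::euclidean_space \<Rightarrow> real \<Rightarrow> real"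
  assumes "\<And>b. b \<in> Basis \<Longrightarrow> integrable lborel (f b)"
  shows "(\<integral>x. (\<Prod>b\<in>Basis. f b (x \<bullet> b)) \<partial>lborel) = (\<Prod>b\<in>Basis. \<integral>x. f b x \<partial>lborel)"
proof -
  interpret product_sigma_finite "\<lambda>_. lborel::real measure"
    by standard
  have "(\<integral>x. (\<Prod>b\<in>Basis. f b (x \<bullet> b)) \<partial>lborel) =
      (\<integral>x. (\<Prod>b\<in>Basis. f b ((\<Sum>b\<in>Basis. x b *\<^sub>R b) \<bullet> b)) \<partial>(\<Pi>\<^sub>M b\<in>Basis. lborel))"
    using assms by (subst lborel_eq[where 'a='a], subst integral_distr) auto
  also have "\<dots> = (\<integral>x. (\<Prod>b\<in>Basis. f b (x b)) \<partial>(\<Pi>\<^sub>M b\<in>Basis. lborel))"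
    by (intro Bochner_Integration.integral_cong refl prod.cong)
      (auto simp: inner_sum_left inner_Basis if_distrib sum.delta cong: if_cong)
  also have "\<dots> = (\<Prod>b\<in>Basis. \<integral>x. f b x \<partial>lborel)"
    using assms by (simp add: product_integral_prod)
  finally show ?thesis .
qed

lemma integral_UNIV_indicator_mult:
  fixes f :: "'a::euclidean_space \<Rightarrow> real"
  shows "integral UNIV (\<lambda>x. indicator S x * f x) = integral S f"
proof -
  have "(\<lambda>x. indicator S x * f x) = (\<lambda>x. if x \<in> S then f x else 0)"
    by (simp add: fun_eq_iff)
  then show ?thesis
    by (simp add: integral_restrict_UNIV)
qed

lemma indicator_cbox_prod_Basis:
  "indicator (cbox l u) x = (\<Prod>b\<in>Basis. indicator {l \<bullet> b..u \<bullet> b} (x \<bullet> b) :: real)"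
proof (cases "x \<in> cbox l u")
  case False
  then obtain b where b: "b \<in> Basis" "x \<bullet> b \<notin> {l \<bullet> b..u \<bullet> b}"
    by (auto simp: mem_box)
  then have "(\<Prod>b\<in>Basis. indicator {l \<bullet> b..u \<bullet> b} (x \<bullet> b) :: real) = 0"
    by (intro prod_zero bexI[of _ b]) auto
  then show ?thesis
    using False by simp
qed (simp add: mem_box)

lemma integral_cbox_prod_Basis:
  fixes h :: "'a::euclidean_space \<Rightarrow> real \<Rightarrow> real"
  assumes cont: "\<And>b. b \<in> Basis \<Longrightarrow> continuous_on UNIV (h b)"
  shows "integral (cbox l u) (\<lambda>x. \<Prod>b\<in>Basis. h b (x \<bullet> b)) = (\<Prod>b\<in>Basis. integral {l \<bullet> b..u \<bullet> b} (h b))"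
proof -
  let ?H = "\<lambda>x. \<Prod>b\<in>Basis. h b (x \<bullet> b)"
  have "continuous_on UNIV ?H"
    by (intro continuous_on_prod continuous_on_compose2[OF cont] continuous_intros) auto
  then have int: "integrable lborel (\<lambda>x. indicator (cbox l u) x * ?H x)"
    using borel_integrable_compact[of "cbox l u" ?H] continuous_on_subset by auto
  have int1: "integrable lborel (\<lambda>t. indicator {l \<bullet> b..u \<bullet> b} t * h b t)" if "b \<in> Basis" for b
    using borel_integrable_compact[of "{l \<bullet> b..u \<bullet> b}" "h b"] continuous_on_subset[OF cont[OF that]]
    by auto
  have "integral (cbox l u) ?H = integral UNIV (\<lambda>x. indicator (cbox l u) x * ?H x)"
    by (rule integral_UNIV_indicator_mult[symmetric])
  also have "\<dots> = (\<integral>x. indicator (cbox l u) x * ?H x \<partial>lborel)"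
    by (rule integral_lborel[OF int])
  also have "\<dots> = (\<integral>x. (\<Prod>b\<in>Basis. indicator {l \<bullet> b..u \<bullet> b} (x \<bullet> b) * h b (x \<bullet> b)) \<partial>lborel)"
    by (simp add: indicator_cbox_prod_Basis prod.distrib)
  also have "\<dots> = (\<Prod>b\<in>Basis. \<integral>t. indicator {l \<bullet> b..u \<bullet> b} t * h b t \<partial>lborel)"
    using int1 by (rule integral_lborel_prod_Basis[where f = "\<lambda>b t. indicator {l \<bullet> b..u \<bullet> b} t * h b t"])
  also have "\<dots> = (\<Prod>b\<in>Basis. integral {l \<bullet> b..u \<bullet> b} (h b))"
    by (intro prod.cong refl)
      (simp add: integral_lborel[OF int1, symmetric] integral_UNIV_indicator_mult)
  finally show ?thesis .
qed

lemma integral_cbox_prod_cart: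
  fixes h :: "'n::finite \<Rightarrow> real \<Rightarrow> real" and l u :: "real^'n"
  assumes cont: "\<And>k. continuous_on UNIV (h k)"
  shows "integral (cbox l u) (\<lambda>x. \<Prod>k\<in>UNIV. h k (x $ k)) = (\<Prod>k\<in>UNIV. integral {l $ k..u $ k} (h k))"
proof -
  have prod_Basis: "(\<Prod>b\<in>(Basis :: (real^'n) set). F (axis_index b)) = (\<Prod>k\<in>UNIV. F k)"
    for F :: "'n \<Rightarrow> real"
    by (simp add: Basis_vec_def UNION_singleton_eq_range prod.reindex axis_eq_axis inj_on_def)
  have component: "x \<bullet> b = x $ axis_index b" if "b \<in> Basis" for x :: "real^'n" and b
    using that by (metis axis_index cart_eq_inner_axis)
  have "integral (cbox l u) (\<lambda>x. \<Prod>k\<in>UNIV. h k (x $ k))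
      = integral (cbox l u) (\<lambda>x. \<Prod>b\<in>Basis. h (axis_index b) (x \<bullet> b))"
    by (simp add: component prod_Basis[symmetric] cong: prod.cong)
  also have "\<dots> = (\<Prod>b\<in>(Basis :: (real^'n) set). integral {l \<bullet> b..u \<bullet> b} (h (axis_index b)))"
    using cont by (rule integral_cbox_prod_Basis)
  also have "\<dots> = (\<Prod>b\<in>(Basis :: (real^'n) set). (\<lambda>k. integral {l $ k..u $ k} (h k)) (axis_index b))"
    by (intro prod.cong refl) (simp add: component)
  also have "\<dots> = (\<Prod>k\<in>UNIV. integral {l $ k..u $ k} (h k))"
    by (rule prod_Basis)
  finally show ?thesis .
qed

lemma integral_shifted_power:
  fixes l u c :: real
  assumes "l \<le> u"
  shows "integral {l..u} (\<lambda>t. (t - c) ^ m) = ((u - c) ^ Suc m - (l - c) ^ Suc m) / real (Suc m)"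
proof -
  have "((\<lambda>t. (t - c) ^ Suc m / real (Suc m)) has_real_derivative (x - c) ^ m) (at x within {l..u})"
    for x
    by (intro derivative_eq_intros) auto
  then have "((\<lambda>t. (t - c) ^ m) has_integral (u - c) ^ Suc m / real (Suc m) - (l - c) ^ Suc m / real (Suc m))
      {l..u}"
    using assms by (intro fundamental_theorem_of_calculus)
      (auto simp: has_real_derivative_iff_has_vector_derivative[symmetric])
  then show ?thesis
    by (simp add: integral_unique diff_divide_distrib)
qed

lemma Delta_nonneg: "\<xi> $ k \<le> \<eta> $ k \<Longrightarrow> 0 \<le> Delta \<xi> \<eta> N k"
  by (simp add: Delta_def)

lemma R_alpha_subset_cbox:
  assumes le: "\<forall>k. \<xi> $ k \<le> \<eta> $ k" and \<alpha>: "\<forall>k. 1 \<le> \<alpha> k \<and> \<alpha> k \<le> N k"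
  shows "R_alpha \<xi> \<eta> N \<alpha> \<subseteq> cbox \<xi> \<eta>"
proof -
  have lo: "\<xi> $ k \<le> \<xi> $ k + (real (\<alpha> k) - 1) * Delta \<xi> \<eta> N k"
    and hi: "\<xi> $ k + real (\<alpha> k) * Delta \<xi> \<eta> N k \<le> \<eta> $ k" for k
  proof -
    have \<alpha>k: "1 \<le> real (\<alpha> k)" "real (\<alpha> k) \<le> real (N k)"
      using \<alpha> by auto
    show "\<xi> $ k \<le> \<xi> $ k + (real (\<alpha> k) - 1) * Delta \<xi> \<eta> N k"
      using \<alpha>k Delta_nonneg[OF le[rule_format]] by simp
    have "real (\<alpha> k) * Delta \<xi> \<eta> N k \<le> real (N k) * Delta \<xi> \<eta> N k"
      using \<alpha>k Delta_nonneg[OF le[rule_format]] by (intro mult_right_mono) auto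
    also have "\<dots> = \<eta> $ k - \<xi> $ k"
      using \<alpha>k by (simp add: Delta_def)
    finally show "\<xi> $ k + real (\<alpha> k) * Delta \<xi> \<eta> N k \<le> \<eta> $ k"
      by simp
  qed
  show ?thesis
  proof
    fix x assume "x \<in> R_alpha \<xi> \<eta> N \<alpha>"
    then have "\<xi> $ k + (real (\<alpha> k) - 1) * Delta \<xi> \<eta> N k \<le> x $ k"
      and "x $ k \<le> \<xi> $ k + real (\<alpha> k) * Delta \<xi> \<eta> N k" for k
      by (simp_all add: R_alpha_def mem_box_cart)
    then show "x \<in> cbox \<xi> \<eta>"
      unfolding mem_box_cart using lo hi by (meson order_trans)
  qed
qed

lemma measure_R_alpha:
  assumes "\<forall>k. \<xi> $ k \<le> \<eta> $ k"
  shows "measure lborel (R_alpha \<xi> \<eta> N \<alpha>) = (\<Prod>k\<in>UNIV. Delta \<xi> \<eta> N k)"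
  using Delta_nonneg[OF assms[rule_format]]
  by (simp add: R_alpha_def content_cbox_cart interval_ne_empty_cart algebra_simps)

lemma integral_R_alpha_monomial:
  assumes le: "\<forall>k. \<xi> $ k \<le> \<eta> $ k" and \<alpha>: "\<forall>k. 1 \<le> \<alpha> k \<and> \<alpha> k \<le> N k"
    and \<gamma>: "\<forall>k. \<gamma> k < N k"
  shows "integral (R_alpha \<xi> \<eta> N \<alpha>) (\<lambda>x. \<Prod>k\<in>UNIV. (x $ k - a $ k) ^ \<gamma> k)
    = (\<Prod>k\<in>UNIV. V_mat a \<xi> \<eta> N k (\<alpha> k) (\<gamma> k + 1)) / (\<Prod>k\<in>UNIV. real (\<gamma> k + 1))"
proof -
  have "integral (R_alpha \<xi> \<eta> N \<alpha>) (\<lambda>x. \<Prod>k\<in>UNIV. (x $ k - a $ k) ^ \<gamma> k)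
      = (\<Prod>k\<in>UNIV. integral {\<xi> $ k + (real (\<alpha> k) - 1) * Delta \<xi> \<eta> N k..\<xi> $ k + real (\<alpha> k) * Delta \<xi> \<eta> N k}
          (\<lambda>t. (t - a $ k) ^ \<gamma> k))"
    unfolding R_alpha_def by (subst integral_cbox_prod_cart) (auto intro!: continuous_intros)
  also have "\<dots> = (\<Prod>k\<in>UNIV. V_mat a \<xi> \<eta> N k (\<alpha> k) (\<gamma> k + 1) / real (\<gamma> k + 1))"
  proof (intro prod.cong refl)
    fix k
    have "\<xi> $ k + (real (\<alpha> k) - 1) * Delta \<xi> \<eta> N k \<le> \<xi> $ k + real (\<alpha> k) * Delta \<xi> \<eta> N k"
      using Delta_nonneg[OF le[rule_format], of N k] by (simp add: algebra_simps)
    moreover have "\<alpha> k \<in> {1..N k}" "\<gamma> k + 1 \<in> {1..N k}"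
      using \<alpha> \<gamma> by (auto simp: Suc_le_eq)
    ultimately show "integral {\<xi> $ k + (real (\<alpha> k) - 1) * Delta \<xi> \<eta> N k..\<xi> $ k + real (\<alpha> k) * Delta \<xi> \<eta> N k}
        (\<lambda>t. (t - a $ k) ^ \<gamma> k) = V_mat a \<xi> \<eta> N k (\<alpha> k) (\<gamma> k + 1) / real (\<gamma> k + 1)"
      by (simp only: integral_shifted_power V_mat_def if_True Suc_eq_plus1 conj_absorb)
  qed
  finally show ?thesis
    by (simp add: prod_dividef)
qed

(* pos records the direction of the sign change; it corresponds to n_y(f) = 1. *)
definition sign_changes_at_graph ::
    "('x \<Rightarrow> real \<Rightarrow> real) \<Rightarrow> ('x \<Rightarrow> real) \<Rightarrow> bool \<Rightarrow> 'x set \<Rightarrow> real \<Rightarrow> real \<Rightarrow> bool" where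
  "sign_changes_at_graph f g pos R r s \<longleftrightarrow>
     (\<forall>x\<in>R. r < g x \<and> g x < s \<and> (\<forall>y\<in>{r..s}. 0 \<le> f x y \<longleftrightarrow> (if pos then g x \<le> y else y \<le> g x)))"

lemma closed_region_between_graphs:
  fixes u1 u2 :: "'a::euclidean_space \<Rightarrow> real"
  assumes cont1: "continuous_on UNIV u1" and cont2: "continuous_on UNIV u2"
  shows "closed {z. fst z \<in> cbox l u \<and> u1 (fst z) \<le> snd z \<and> snd z \<le> u2 (fst z)}"
proof -
  have S: "{z. fst z \<in> cbox l u \<and> u1 (fst z) \<le> snd z \<and> snd z \<le> u2 (fst z)}
      = (cbox l u \<times> UNIV) \<inter> {z. u1 (fst z) - snd z \<le> 0} \<inter> {z. snd z - u2 (fst z) \<le> 0}"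
    by auto
  have "closed {z::'a \<times> real. u1 (fst z) - snd z \<le> 0}"
    by (rule closed_Collect_le) (intro continuous_intros continuous_on_compose2[OF cont1], auto)
  moreover have "closed {z::'a \<times> real. snd z - u2 (fst z) \<le> 0}"
    by (rule closed_Collect_le) (intro continuous_intros continuous_on_compose2[OF cont2], auto)
  ultimately show ?thesis
    unfolding S by (intro closed_Int closed_Times closed_cbox closed_UNIV)
qed

lemma has_integral_region_between_graphs:
  fixes u1 u2 :: "'a::euclidean_space \<Rightarrow> real"
  assumes cont1: "continuous_on UNIV u1" and cont2: "continuous_on UNIV u2"
    and le: "\<And>x. x \<in> cbox l u \<Longrightarrow> u1 x \<le> u2 x"
  shows "((\<lambda>z. 1::real) has_integral integral (cbox l u) (\<lambda>x. u2 x - u1 x))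
           {z. fst z \<in> cbox l u \<and> u1 (fst z) \<le> snd z \<and> snd z \<le> u2 (fst z)}"
proof -
  let ?B = "cbox l u"
  let ?S = "{z. fst z \<in> ?B \<and> u1 (fst z) \<le> snd z \<and> snd z \<le> u2 (fst z)}"
  let ?r = "integral ?B (\<lambda>x. u2 x - u1 x)"
  have "continuous_on ?B (\<lambda>x. u2 x - u1 x)"
    using continuous_on_subset[OF cont1] continuous_on_subset[OF cont2] by (intro continuous_intros) auto
  then have hi: "((\<lambda>x. u2 x - u1 x) has_integral ?r) ?B"
    by (intro integrable_integral integrable_continuous)
  have S_borel: "?S \<in> sets borel"
    by (rule borel_closed[OF closed_region_between_graphs[OF cont1 cont2]])
  then have S: "?S \<in> sets (lborel \<Otimes>\<^sub>M lborel)"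
    by (subst lborel_prod) simp
  have "emeasure lborel ?S = emeasure (lborel \<Otimes>\<^sub>M (lborel :: real measure)) ?S"
    by (simp add: lborel_prod)
  also have "\<dots> = (\<integral>\<^sup>+x. emeasure lborel (Pair x -` ?S) \<partial>lborel)"
    by (rule lborel.emeasure_pair_measure_alt[OF S])
  also have "\<dots> = (\<integral>\<^sup>+x. ennreal (u2 x - u1 x) * indicator ?B x \<partial>lborel)"
  proof (intro nn_integral_cong)
    fix x :: 'a
    show "emeasure lborel (Pair x -` ?S) = ennreal (u2 x - u1 x) * indicator ?B x"
    proof (cases "x \<in> ?B")
      case True
      then have "Pair x -` ?S = {u1 x..u2 x}"
        by auto
      then show ?thesis
        using True le[OF True] by simp
    qed simp
  qed
  also have "\<dots> = ennreal ?r"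
    by (rule nn_integral_has_integral_lebesgue'[OF _ hi]) (use le in auto)
  moreover have "0 \<le> ?r"
    by (rule has_integral_nonneg[OF hi]) (use le in auto)
  ultimately show ?thesis
    using has_integral_iff_emeasure_lborel[OF S_borel] by simp
qed

lemma integral_between_graphs:
  fixes u1 u2 :: "'a::euclidean_space \<Rightarrow> real" and F :: "'a \<times> real \<Rightarrow> real"
  assumes cont1: "continuous_on UNIV u1" and cont2: "continuous_on UNIV u2"
    and between: "\<And>x. x \<in> cbox l u \<Longrightarrow> r \<le> u1 x \<and> u1 x \<le> u2 x \<and> u2 x \<le> s"
    and F: "\<And>x y. x \<in> cbox l u \<Longrightarrow> y \<in> {r..s} \<Longrightarrow>
      F (x, y) = (if u1 x \<le> y \<and> y \<le> u2 x then 1 else 0)"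
  shows "integral (cbox l u \<times> {r..s}) F = integral (cbox l u) (\<lambda>x. u2 x - u1 x)"
proof -
  let ?S = "{z. fst z \<in> cbox l u \<and> u1 (fst z) \<le> snd z \<and> snd z \<le> u2 (fst z)}"
  have sub: "?S \<subseteq> cbox l u \<times> {r..s}"
    using between by force
  have "((\<lambda>z. 1) has_integral integral (cbox l u) (\<lambda>x. u2 x - u1 x)) ?S"
    using has_integral_region_between_graphs[OF cont1 cont2] between by blast
  then have "((\<lambda>z. if z \<in> ?S then 1 else 0) has_integral integral (cbox l u) (\<lambda>x. u2 x - u1 x))
      (cbox l u \<times> {r..s})"
    by (subst has_integral_restrict[OF sub])
  then have "(F has_integral integral (cbox l u) (\<lambda>x. u2 x - u1 x)) (cbox l u \<times> {r..s})"
    by (rule has_integral_eq[rotated]) (auto simp: F)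
  then show ?thesis
    by (rule integral_unique)
qed

lemma d_alpha_eq_integral:
  fixes f :: "real^'n \<Rightarrow> real \<Rightarrow> real" and g :: "real^'n \<Rightarrow> real"
  assumes le: "\<forall>k. \<xi> $ k \<le> \<eta> $ k" and \<alpha>: "\<forall>k. 1 \<le> \<alpha> k \<and> \<alpha> k \<le> N k"
    and cont_g: "continuous_on UNIV g" and graph: "sign_changes_at_graph f g pos (cbox \<xi> \<eta>) r s"
  shows "d_alpha f (if pos then 1 else -1) {r..s} \<xi> \<eta> N \<alpha> = integral (R_alpha \<xi> \<eta> N \<alpha>) g"
proof -
  obtain lo hi :: "real^'n" where R: "R_alpha \<xi> \<eta> N \<alpha> = cbox lo hi"
    unfolding R_alpha_def by blast
  have sub: "cbox lo hi \<subseteq> cbox \<xi> \<eta>"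
    using R_alpha_subset_cbox[OF le \<alpha>] by (simp add: R)
  have "\<xi> \<in> cbox \<xi> \<eta>"
    using le by (simp add: mem_box_cart)
  then have rs: "r < s"
    using graph unfolding sign_changes_at_graph_def by force
  have g_between: "r \<le> g x \<and> g x \<le> s" if "x \<in> cbox lo hi" for x
    using graph sub that unfolding sign_changes_at_graph_def by force
  have Theta: "Theta_y f x y = (if pos then (if g x \<le> y then 1 else 0) else (if y \<le> g x then 1 else 0))"
    if "x \<in> cbox lo hi" "y \<in> {r..s}" for x y
  proof -
    have "0 \<le> f x y \<longleftrightarrow> (if pos then g x \<le> y else y \<le> g x)"
      using graph sub that unfolding sign_changes_at_graph_def by blast
    then show ?thesis
      by (simp add: Theta_y_def)
  qed
  have g_int: "g integrable_on cbox lo hi"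
    by (intro integrable_continuous continuous_on_subset[OF cont_g]) auto
  let ?m = "measure lborel (cbox lo hi)"
  have m: "?m = (\<Prod>k\<in>UNIV. Delta \<xi> \<eta> N k)"
    using measure_R_alpha[OF le, of N \<alpha>] by (simp add: R)
  let ?\<Theta> = "\<lambda>z. Theta_y f (fst z) (snd z)"
  show ?thesis
  proof (cases pos)
    case True
    have "integral (cbox lo hi \<times> {r..s}) ?\<Theta> = integral (cbox lo hi) (\<lambda>x. s - g x)"
      by (rule integral_between_graphs[OF cont_g continuous_on_const])
        (use g_between Theta True in auto)
    also have "\<dots> = ?m * s - integral (cbox lo hi) g"
      using integral_diff[OF integrable_const g_int] by simp
    finally show ?thesis
      using True rs unfolding d_alpha_def R m by simp
  next
    case False
    have "integral (cbox lo hi \<times> {r..s}) ?\<Theta> = integral (cbox lo hi) (\<lambda>x. g x - r)"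
      by (rule integral_between_graphs[OF continuous_on_const cont_g])
        (use g_between Theta False in auto)
    also have "\<dots> = integral (cbox lo hi) g - ?m * r"
      using integral_diff[OF g_int integrable_const] by simp
    finally show ?thesis
      using False rs unfolding d_alpha_def R m by simp
  qed
qed

lemma power_eq_sum_shifted_powers:
  fixes x a :: "'a::comm_ring_1"
  assumes "n \<le> M"
  shows "x ^ n = (\<Sum>j\<le>M. of_nat (n choose j) * a ^ (n - j) * (x - a) ^ j)"
proof -
  have "x ^ n = ((x - a) + a) ^ n"
    by simp
  also have "\<dots> = (\<Sum>j\<le>n. of_nat (n choose j) * (x - a) ^ j * a ^ (n - j))"
    by (rule binomial_ring)
  also have "\<dots> = (\<Sum>j\<le>n. of_nat (n choose j) * a ^ (n - j) * (x - a) ^ j)"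
    by (simp add: mult_ac)
  also have "\<dots> = (\<Sum>j\<le>M. of_nat (n choose j) * a ^ (n - j) * (x - a) ^ j)"
  proof (rule sum.mono_neutral_left)
    show "\<forall>j\<in>{..M} - {..n}. of_nat (n choose j) * a ^ (n - j) * (x - a) ^ j = 0"
      by (simp add: binomial_eq_0)
  qed (use assms in auto)
  finally show ?thesis .
qed

definition taylor_coeff :: "(('n::finite \<Rightarrow> nat) \<Rightarrow> real) \<Rightarrow> real^'n \<Rightarrow> ('n \<Rightarrow> nat) \<Rightarrow> real" where
  "taylor_coeff p a \<gamma> =
     (\<Sum>\<beta>\<in>{\<beta>. p \<beta> \<noteq> 0}. p \<beta> * (\<Prod>k\<in>UNIV. real (\<beta> k choose \<gamma> k) * (a $ k) ^ (\<beta> k - \<gamma> k)))"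

lemma le_deg_in:
  assumes "finite {\<beta>. p \<beta> \<noteq> 0}" and "p \<beta> \<noteq> 0"
  shows "\<beta> k \<le> deg_in p k"
proof -
  have "{\<beta> k | \<beta>. p \<beta> \<noteq> 0} = (\<lambda>\<beta>. \<beta> k) ` {\<beta>. p \<beta> \<noteq> 0}"
    by auto
  then show ?thesis
    unfolding deg_in_def using assms by (intro Max_ge) auto
qed

lemma poly_eval_taylor_expansion:
  fixes p :: "('n::finite \<Rightarrow> nat) \<Rightarrow> real"
  assumes fin: "finite {\<beta>. p \<beta> \<noteq> 0}" and deg: "\<forall>k. deg_in p k \<le> M k"
  shows "poly_eval p x = (\<Sum>\<gamma>\<in>{\<gamma>. \<forall>k. \<gamma> k \<le> M k}. taylor_coeff p a \<gamma> * (\<Prod>k\<in>UNIV. (x $ k - a $ k) ^ \<gamma> k))"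
proof -
  let ?S = "{\<beta>. p \<beta> \<noteq> 0}"
  let ?B = "{\<gamma>. \<forall>k. \<gamma> k \<le> M k}"
  let ?C = "\<lambda>\<beta> \<gamma>. \<Prod>k\<in>UNIV. real (\<beta> k choose \<gamma> k) * (a $ k) ^ (\<beta> k - \<gamma> k)"
  let ?X = "\<lambda>\<gamma>. \<Prod>k\<in>UNIV. (x $ k - a $ k) ^ \<gamma> k"
  have monomial: "(\<Prod>k\<in>UNIV. (x $ k) ^ \<beta> k) = (\<Sum>\<gamma>\<in>?B. ?C \<beta> \<gamma> * ?X \<gamma>)" if "\<beta> \<in> ?S" for \<beta>
  proof -
    have "\<beta> k \<le> M k" for k
      using le_deg_in[OF fin, of \<beta> k] that deg by (auto intro: order_trans)
    then have "(\<Prod>k\<in>UNIV. (x $ k) ^ \<beta> k)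
        = (\<Prod>k\<in>UNIV. \<Sum>j\<le>M k. real (\<beta> k choose j) * (a $ k) ^ (\<beta> k - j) * (x $ k - a $ k) ^ j)"
      by (intro prod.cong refl power_eq_sum_shifted_powers)
    also have "\<dots> = (\<Sum>\<gamma>\<in>?B. \<Prod>k\<in>UNIV. real (\<beta> k choose \<gamma> k) * (a $ k) ^ (\<beta> k - \<gamma> k) * (x $ k - a $ k) ^ \<gamma> k)"
      using Collect_all_mem_eq_PiE[of "\<lambda>k. {..M k}"] by (simp add: prod_sum_PiE)
    also have "\<dots> = (\<Sum>\<gamma>\<in>?B. ?C \<beta> \<gamma> * ?X \<gamma>)"
      by (simp add: prod.distrib)
    finally show ?thesis .
  qed
  have "poly_eval p x = (\<Sum>\<beta>\<in>?S. p \<beta> * (\<Sum>\<gamma>\<in>?B. ?C \<beta> \<gamma> * ?X \<gamma>))"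
    unfolding poly_eval_def by (intro sum.cong refl) (simp add: monomial)
  also have "\<dots> = (\<Sum>\<beta>\<in>?S. \<Sum>\<gamma>\<in>?B. p \<beta> * ?C \<beta> \<gamma> * ?X \<gamma>)"
    by (simp add: sum_distrib_left mult.assoc)
  also have "\<dots> = (\<Sum>\<gamma>\<in>?B. \<Sum>\<beta>\<in>?S. p \<beta> * ?C \<beta> \<gamma> * ?X \<gamma>)"
    by (rule sum.swap)
  also have "\<dots> = (\<Sum>\<gamma>\<in>?B. taylor_coeff p a \<gamma> * ?X \<gamma>)"
    by (simp add: taylor_coeff_def sum_distrib_right)
  finally show ?thesis .
qed

lemma integral_R_alpha_poly_eval:
  fixes p :: "('n::finite \<Rightarrow> nat) \<Rightarrow> real"
  assumes le: "\<forall>k. \<xi> $ k \<le> \<eta> $ k" and fin: "finite {\<beta>. p \<beta> \<noteq> 0}"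
    and deg: "\<forall>k. deg_in p k < N k" and \<alpha>: "\<forall>k. 1 \<le> \<alpha> k \<and> \<alpha> k \<le> N k"
  shows "integral (R_alpha \<xi> \<eta> N \<alpha>) (poly_eval p) = (\<Sum>\<gamma>\<in>{\<gamma>. \<forall>k. \<gamma> k \<le> N k - 1}.
      taylor_coeff p a \<gamma> / (\<Prod>k\<in>UNIV. real (\<gamma> k + 1)) * (\<Prod>k\<in>UNIV. V_mat a \<xi> \<eta> N k (\<alpha> k) (\<gamma> k + 1)))"
proof -
  let ?B = "{\<gamma>. \<forall>k. \<gamma> k \<le> N k - 1}"
  let ?X = "\<lambda>\<gamma> x. \<Prod>k\<in>UNIV. (x $ k - a $ k) ^ \<gamma> k"
  have deg': "\<forall>k. deg_in p k \<le> N k - 1"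
  proof
    fix k
    show "deg_in p k \<le> N k - 1"
      using deg[rule_format, of k] by linarith
  qed
  have "finite ?B"
    using Collect_all_mem_eq_PiE[of "\<lambda>k. {..N k - 1}"] by (simp add: finite_PiE)
  have "poly_eval p = (\<lambda>x. \<Sum>\<gamma>\<in>?B. taylor_coeff p a \<gamma> * ?X \<gamma> x)"
    by (intro ext poly_eval_taylor_expansion[OF fin deg'])
  then have "integral (R_alpha \<xi> \<eta> N \<alpha>) (poly_eval p)
      = (\<Sum>\<gamma>\<in>?B. taylor_coeff p a \<gamma> * integral (R_alpha \<xi> \<eta> N \<alpha>) (?X \<gamma>))"
    using \<open>finite ?B\<close> unfolding R_alpha_def
    by (simp add: integral_sum integrable_continuous continuous_intros)
  moreover have "\<gamma> k < N k" if "\<gamma> \<in> ?B" for \<gamma> k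
  proof -
    have "\<gamma> k \<le> N k - 1" "deg_in p k < N k"
      using that deg by auto
    then show ?thesis
      by linarith
  qed
  ultimately show ?thesis
    using integral_R_alpha_monomial[OF le \<alpha>] by (simp add: mult.assoc)
qed

lemma sum_prod_inv_matN_V_mat:
  assumes lt: "\<forall>k. \<xi> $ k < \<eta> $ k" and \<beta>: "\<forall>k. \<beta> k < N k" and \<gamma>: "\<forall>k. \<gamma> k < N k"
  shows "(\<Sum>\<alpha>\<in>{\<alpha>. \<forall>k. 1 \<le> \<alpha> k \<and> \<alpha> k \<le> N k}.
      (\<Prod>k\<in>UNIV. inv_matN (N k) (V_mat a \<xi> \<eta> N k) (\<beta> k + 1) (\<alpha> k)) *
      (\<Prod>k\<in>UNIV. V_mat a \<xi> \<eta> N k (\<alpha> k) (\<gamma> k + 1))) = (if \<beta> = \<gamma> then 1 else 0)"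
proof -
  have "(\<Sum>\<alpha>\<in>{\<alpha>. \<forall>k. \<alpha> k \<in> {1..N k}}.
      \<Prod>k\<in>UNIV. inv_matN (N k) (V_mat a \<xi> \<eta> N k) (\<beta> k + 1) (\<alpha> k) * V_mat a \<xi> \<eta> N k (\<alpha> k) (\<gamma> k + 1))
      = (if (\<lambda>k. \<beta> k + 1) = (\<lambda>k. \<gamma> k + 1) then 1 else 0)"
    using lt \<beta> \<gamma> by (intro sum_prod_left_inverse inv_matN_V_mat) (auto simp: Suc_le_eq)
  moreover have "(\<lambda>k. \<beta> k + 1) = (\<lambda>k. \<gamma> k + 1) \<longleftrightarrow> \<beta> = \<gamma>"
    by (auto simp: fun_eq_iff)
  ultimately show ?thesis
    by (simp add: prod.distrib)
qed

lemma c_beta_eq_taylor_coeff: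
  fixes p :: "('n::finite \<Rightarrow> nat) \<Rightarrow> real"
  assumes lt: "\<forall>k. \<xi> $ k < \<eta> $ k" and fin: "finite {\<beta>. p \<beta> \<noteq> 0}"
    and deg: "\<forall>k. deg_in p k < N k" and \<beta>: "\<forall>k. \<beta> k \<le> N k - 1"
    and d: "\<And>\<alpha>. \<forall>k. 1 \<le> \<alpha> k \<and> \<alpha> k \<le> N k \<Longrightarrow>
      d_alpha f \<nu> I \<xi> \<eta> N \<alpha> = integral (R_alpha \<xi> \<eta> N \<alpha>) (poly_eval p)"
  shows "c_beta f \<nu> I a \<xi> \<eta> N \<beta> = taylor_coeff p a \<beta>"
proof -
  let ?A = "{\<alpha>. \<forall>k. 1 \<le> \<alpha> k \<and> \<alpha> k \<le> N k}"
  let ?B = "{\<gamma>. \<forall>k. \<gamma> k \<le> N k - 1}"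
  let ?W = "\<lambda>\<alpha>. \<Prod>k\<in>UNIV. inv_matN (N k) (V_mat a \<xi> \<eta> N k) (\<beta> k + 1) (\<alpha> k)"
  let ?V = "\<lambda>\<alpha> \<gamma>. \<Prod>k\<in>UNIV. V_mat a \<xi> \<eta> N k (\<alpha> k) (\<gamma> k + 1)"
  let ?P = "\<lambda>\<gamma>. \<Prod>k\<in>UNIV. real (\<gamma> k + 1)"
  let ?e = "taylor_coeff p a"
  have "finite ?B"
    using Collect_all_mem_eq_PiE[of "\<lambda>k. {..N k - 1}"] by (simp add: finite_PiE)
  have in_range: "\<forall>k. \<gamma> k < N k" if "\<gamma> \<in> ?B" for \<gamma>
  proof
    fix k
    have "\<gamma> k \<le> N k - 1" "deg_in p k < N k"
      using that deg by auto
    then show "\<gamma> k < N k"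
      by linarith
  qed
  have "\<forall>k. \<xi> $ k \<le> \<eta> $ k"
    using lt by (simp add: less_imp_le)
  then have d_expand: "d_alpha f \<nu> I \<xi> \<eta> N \<alpha> = (\<Sum>\<gamma>\<in>?B. ?e \<gamma> / ?P \<gamma> * ?V \<alpha> \<gamma>)"
    if "\<alpha> \<in> ?A" for \<alpha>
    using d[of \<alpha>] integral_R_alpha_poly_eval[OF _ fin deg, where \<alpha> = \<alpha>] that by simp
  have "c_beta f \<nu> I a \<xi> \<eta> N \<beta> = ?P \<beta> * (\<Sum>\<alpha>\<in>?A. \<Sum>\<gamma>\<in>?B. ?W \<alpha> * (?e \<gamma> / ?P \<gamma> * ?V \<alpha> \<gamma>))"
    unfolding c_beta_def by (simp add: d_expand sum_distrib_left)
  also have "\<dots> = ?P \<beta> * (\<Sum>\<gamma>\<in>?B. ?e \<gamma> / ?P \<gamma> * (\<Sum>\<alpha>\<in>?A. ?W \<alpha> * ?V \<alpha> \<gamma>))"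
    by (subst sum.swap) (simp add: sum_distrib_left mult_ac)
  also have "\<dots> = ?P \<beta> * (\<Sum>\<gamma>\<in>?B. if \<beta> = \<gamma> then ?e \<gamma> / ?P \<gamma> else 0)"
  proof (intro arg_cong2[where f = "(*)"] refl sum.cong)
    fix \<gamma> assume "\<gamma> \<in> ?B"
    then have "(\<Sum>\<alpha>\<in>?A. ?W \<alpha> * ?V \<alpha> \<gamma>) = (if \<beta> = \<gamma> then 1 else 0)"
      using \<beta> by (intro sum_prod_inv_matN_V_mat[OF lt in_range in_range]) auto
    then show "?e \<gamma> / ?P \<gamma> * (\<Sum>\<alpha>\<in>?A. ?W \<alpha> * ?V \<alpha> \<gamma>) = (if \<beta> = \<gamma> then ?e \<gamma> / ?P \<gamma> else 0)"
      by simp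
  qed
  also have "\<dots> = ?e \<beta>"
    using \<beta> \<open>finite ?B\<close> by (simp add: prod_pos less_imp_neq[symmetric])
  finally show ?thesis .
qed

lemma poly_eval_eq_sum_c_beta:
  fixes p :: "('n::finite \<Rightarrow> nat) \<Rightarrow> real"
  assumes lt: "\<forall>k. \<xi> $ k < \<eta> $ k" and fin: "finite {\<beta>. p \<beta> \<noteq> 0}"
    and deg: "\<forall>k. deg_in p k < N k"
    and d: "\<And>\<alpha>. \<forall>k. 1 \<le> \<alpha> k \<and> \<alpha> k \<le> N k \<Longrightarrow>
      d_alpha f \<nu> I \<xi> \<eta> N \<alpha> = integral (R_alpha \<xi> \<eta> N \<alpha>) (poly_eval p)"
  shows "poly_eval p x = (\<Sum>\<beta>\<in>{\<beta>. \<forall>k. \<beta> k \<le> N k - 1}.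
      c_beta f \<nu> I a \<xi> \<eta> N \<beta> * (\<Prod>k\<in>UNIV. (x $ k - a $ k) ^ \<beta> k))"
proof -
  have deg': "\<forall>k. deg_in p k \<le> N k - 1"
  proof
    fix k
    show "deg_in p k \<le> N k - 1"
      using deg[rule_format, of k] by linarith
  qed
  have "poly_eval p x = (\<Sum>\<beta>\<in>{\<beta>. \<forall>k. \<beta> k \<le> N k - 1}. taylor_coeff p a \<beta> * (\<Prod>k\<in>UNIV. (x $ k - a $ k) ^ \<beta> k))"
    by (rule poly_eval_taylor_expansion[OF fin deg'])
  also have "\<dots> = (\<Sum>\<beta>\<in>{\<beta>. \<forall>k. \<beta> k \<le> N k - 1}.
      c_beta f \<nu> I a \<xi> \<eta> N \<beta> * (\<Prod>k\<in>UNIV. (x $ k - a $ k) ^ \<beta> k))"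
    using c_beta_eq_taylor_coeff[OF lt fin deg _ d] by (intro sum.cong refl) auto
  finally show ?thesis .
qed

lemma has_real_derivative_partial_snd:
  fixes f :: "'a::real_normed_vector \<Rightarrow> real \<Rightarrow> real"
  assumes "((\<lambda>z. f (fst z) (snd z)) has_derivative blinfun_apply D) (at (x, y))"
  shows "(f x has_real_derivative blinfun_apply D (0, 1)) (at y)"
proof -
  have "((\<lambda>y. f x y) has_derivative (\<lambda>h. blinfun_apply D (0, h))) (at y)"
    using has_derivative_compose[OF has_derivative_Pair[OF has_derivative_const has_derivative_ident] assms]
    by simp
  moreover have "(\<lambda>h. blinfun_apply D (0, h)) = (*) (blinfun_apply D (0, 1))"
  proof
    fix h :: real
    show "blinfun_apply D (0, h) = blinfun_apply D (0, 1) * h"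
      using blinfun.scaleR_right[of D h "(0, 1)"] by (simp add: mult.commute)
  qed
  ultimately show ?thesis
    unfolding has_field_derivative_def by simp
qed

lemma nonneg_iff_beyond_root:
  fixes h h' :: "real \<Rightarrow> real"
  assumes deriv: "\<And>t. t \<in> {r..s} \<Longrightarrow> (h has_real_derivative h' t) (at t)"
    and sign: "\<And>t. t \<in> {r..s} \<Longrightarrow> 0 < \<sigma> * h' t"
    and c: "c \<in> {r..s}" "h c = 0" and y: "y \<in> {r..s}"
  shows "0 \<le> h y \<longleftrightarrow> (if 0 < \<sigma> then c \<le> y else y \<le> c)"
proof -
  have mono: "strict_mono_on {r..s} (\<lambda>t. \<sigma> * h t)"
  proof (rule strict_mono_onI)
    fix t1 t2 assume t: "t1 \<in> {r..s}" "t2 \<in> {r..s}" "t1 < t2"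
    show "\<sigma> * h t1 < \<sigma> * h t2"
    proof (rule DERIV_pos_imp_increasing[OF \<open>t1 < t2\<close>])
      fix t assume "t1 \<le> t" "t \<le> t2"
      then have "t \<in> {r..s}"
        using t by auto
      then show "\<exists>D. ((\<lambda>t. \<sigma> * h t) has_real_derivative D) (at t) \<and> 0 < D"
        using DERIV_cmult[OF deriv] sign by blast
    qed
  qed
  have below: "\<sigma> * h y < 0 \<longleftrightarrow> y < c" and above: "0 < \<sigma> * h y \<longleftrightarrow> c < y"
    using strict_mono_on_less[OF mono y c(1)] strict_mono_on_less[OF mono c(1) y] c(2) by simp_all
  have "\<sigma> \<noteq> 0"
    using sign[OF c(1)] by auto
  then show ?thesis
    using below above by (cases "0 < \<sigma>") (auto simp: mult_less_0_iff zero_less_mult_iff)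
qed

lemma not_isCont_if_one_sided_limits_differ:
  fixes \<sigma> :: "real \<Rightarrow> 'a::t2_space"
  assumes lim_left: "(\<sigma> \<longlongrightarrow> u) (at_left c)" and lim_right: "(\<sigma> \<longlongrightarrow> v) (at_right c)"
    and "u \<noteq> v"
  shows "\<not> isCont \<sigma> c"
proof
  assume "isCont \<sigma> c"
  then have "(\<sigma> \<longlongrightarrow> \<sigma> c) (at_left c)" "(\<sigma> \<longlongrightarrow> \<sigma> c) (at_right c)"
    by (simp_all add: isCont_def filterlim_at_split)
  then have "u = \<sigma> c" "v = \<sigma> c"
    using tendsto_unique[OF trivial_limit_at_left_real lim_left]
      tendsto_unique[OF trivial_limit_at_right_real lim_right] by auto
  with \<open>u \<noteq> v\<close> show False
    by simp
qed

lemma one_jump_on_step: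
  fixes \<sigma> :: "real \<Rightarrow> real"
  assumes rc: "r < c" and cs: "c < s" and uv: "u \<noteq> v"
    and left: "\<And>y. y \<in> {r..<c} \<Longrightarrow> \<sigma> y = u" and right: "\<And>y. y \<in> {c<..s} \<Longrightarrow> \<sigma> y = v"
  shows "one_jump_on \<sigma> {r..s}"
proof -
  have "eventually (\<lambda>y. \<sigma> y = u) (at_left c)"
    using eventually_at_left_real[OF rc] by eventually_elim (simp add: left)
  then have lim_left: "(\<sigma> \<longlongrightarrow> u) (at_left c)"
    by (rule tendsto_eventually)
  have "eventually (\<lambda>y. \<sigma> y = v) (at_right c)"
    using eventually_at_right_real[OF cs] by eventually_elim (simp add: right)
  then have lim_right: "(\<sigma> \<longlongrightarrow> v) (at_right c)"
    by (rule tendsto_eventually)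
  have interior: "c \<in> interior {r..s}"
    using rc cs by simp
  have jump: "\<not> continuous (at c within {r..s}) \<sigma>"
    using not_isCont_if_one_sided_limits_differ[OF lim_left lim_right uv]
    by (simp add: at_within_interior[OF interior])
  have cont: "continuous (at y within {r..s}) \<sigma>" if y: "y \<in> {r..s}" "y \<noteq> c" for y
  proof -
    obtain d where "d > 0" and same: "\<And>z. z \<in> {r..s} \<Longrightarrow> dist z y < d \<Longrightarrow> \<sigma> z = \<sigma> y"
    proof (cases "y < c")
      case True
      then show ?thesis
        using that[of "c - y"] left y by (auto simp: dist_real_def)
    next
      case False
      then show ?thesis
        using that[of "y - c"] right y by (auto simp: dist_real_def)
    qed
    then have "eventually (\<lambda>z. \<sigma> z = \<sigma> y) (at y within {r..s})"
      by (auto simp: eventually_at intro!: exI[of _ d])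
    then show ?thesis
      unfolding continuous_within by (rule tendsto_eventually)
  qed
  have "\<exists>!c'. c' \<in> {r..s} \<and> \<not> continuous (at c' within {r..s}) \<sigma>"
    using interior_subset[of "{r..s}"] interior jump cont by blast
  moreover have "c' = c" if "c' \<in> {r..s}" "\<not> continuous (at c' within {r..s}) \<sigma>" for c'
    using cont that by blast
  ultimately show ?thesis
    unfolding one_jump_on_def using interior lim_left lim_right uv by blast
qed

lemma sign_y_at_graph:
  assumes graph: "sign_changes_at_graph f g pos R r s" and x: "x \<in> R"
  shows "one_jump_on (sign_y f x) {r..s}" and "n_y f {r..s} x = (if pos then 1 else -1)"
proof -
  have between: "r < g x" "g x < s"
    and key: "\<And>y. y \<in> {r..s} \<Longrightarrow> 0 \<le> f x y \<longleftrightarrow> (if pos then g x \<le> y else y \<le> g x)"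
    using graph x unfolding sign_changes_at_graph_def by auto
  have sign: "sign_y f x y = (if (if pos then g x \<le> y else y \<le> g x) then 1 else -1)"
    if "y \<in> {r..s}" for y
    using key[OF that] by (simp add: sign_y_def)
  show "one_jump_on (sign_y f x) {r..s}"
    by (rule one_jump_on_step[OF between, of "if pos then -1 else 1" "if pos then 1 else -1"])
      (use between in \<open>auto simp: sign\<close>)
  show "n_y f {r..s} x = (if pos then 1 else -1)"
  proof (cases pos)
    case True
    then have "mono_on {r..s} (sign_y f x)"
      by (intro mono_onI) (auto simp: sign)
    then show ?thesis
      using True by (simp add: n_y_def)
  next
    case False
    then have "sign_y f x r = 1" "sign_y f x s = -1"
      using between by (simp_all add: sign)
    then have "\<not> mono_on {r..s} (sign_y f x)"
      using between by (auto dest: mono_onD[of _ _ r s])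
    then show ?thesis
      using False by (simp add: n_y_def)
  qed
qed

lemma isCont_sign_persists:
  fixes h :: "'a::metric_space \<Rightarrow> real"
  assumes cont: "isCont h z0" and nonzero: "h z0 \<noteq> 0"
  obtains \<delta> where "\<delta> > 0" "\<And>z. dist z z0 < \<delta> \<Longrightarrow> 0 < h z0 * h z"
proof -
  obtain \<delta> where "\<delta> > 0" and close: "\<And>z. dist z z0 < \<delta> \<Longrightarrow> dist (h z) (h z0) < \<bar>h z0\<bar>"
    using cont nonzero unfolding continuous_at_eps_delta by (metis zero_less_abs_iff)
  show ?thesis
  proof (rule that[OF \<open>\<delta> > 0\<close>])
    fix z assume "dist z z0 < \<delta>"
    then show "0 < h z0 * h z"
      using close[of z] by (cases "0 < h z0") (auto simp: dist_real_def zero_less_mult_iff abs_if split: if_splits)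
  qed
qed

lemma sign_changes_at_graph_if_partial_sign:
  fixes f :: "'x \<Rightarrow> real \<Rightarrow> real"
  assumes deriv: "\<And>x t. x \<in> R \<Longrightarrow> t \<in> {r..s} \<Longrightarrow> (f x has_real_derivative fy x t) (at t)"
    and sign: "\<And>x t. x \<in> R \<Longrightarrow> t \<in> {r..s} \<Longrightarrow> 0 < \<sigma> * fy x t"
    and root: "\<And>x. x \<in> R \<Longrightarrow> r < g x \<and> g x < s \<and> f x (g x) = 0"
  shows "sign_changes_at_graph f g (0 < \<sigma>) R r s"
  unfolding sign_changes_at_graph_def
proof (intro ballI conjI)
  fix x assume x: "x \<in> R"
  then show "r < g x" "g x < s"
    using root by auto
  fix y assume "y \<in> {r..s}"
  then show "0 \<le> f x y \<longleftrightarrow> (if 0 < \<sigma> then g x \<le> y else y \<le> g x)"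
    using root[OF x] by (intro nonneg_iff_beyond_root[where h' = "fy x"]) (auto intro: deriv[OF x] sign[OF x])
qed

lemma cbox_cart_in_ball:
  fixes a :: "real^'n"
  assumes "0 < \<rho>"
  obtains \<xi> \<eta> where "\<forall>k. \<xi> $ k < \<eta> $ k" "a \<in> cbox \<xi> \<eta>" "cbox \<xi> \<eta> \<subseteq> ball a \<rho>"
proof -
  obtain \<xi> \<eta> :: "real^'n" where box: "cbox \<xi> \<eta> \<subseteq> ball a \<rho>" "a \<in> box \<xi> \<eta>"
    using open_contains_cbox[OF open_ball] centre_in_ball assms by metis
  show ?thesis
  proof (rule that)
    show "\<forall>k. \<xi> $ k < \<eta> $ k"
      using box(2) by (auto simp: mem_box_cart intro: less_trans)
    show "a \<in> cbox \<xi> \<eta>"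
      using box(2) box_subset_cbox by blast
  qed (rule box(1))
qed

lemma implicit_function_sign_box:
  fixes f :: "real^'n \<Rightarrow> real \<Rightarrow> real" and g :: "real^'n \<Rightarrow> real"
    and f' :: "((real^'n) \<times> real) \<Rightarrow> ((real^'n) \<times> real) \<Rightarrow>\<^sub>L real"
  assumes deriv: "\<And>z. ((\<lambda>z. f (fst z) (snd z)) has_derivative blinfun_apply (f' z)) (at z)"
    and cont_deriv: "continuous_on UNIV f'"
    and dy: "blinfun_apply (f' (a, b)) (0, 1) \<noteq> 0"
    and cont_g: "continuous_on UNIV g" and g_at: "g a = b"
    and g_impl: "\<exists>U. open U \<and> a \<in> U \<and> (\<forall>x\<in>U. f x (g x) = 0)"
  obtains \<xi> \<eta> :: "real^'n" and r s pos
  where "\<forall>k. \<xi> $ k < \<eta> $ k" "a \<in> cbox \<xi> \<eta>" "r < s" "b \<in> {r..s}"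
    "sign_changes_at_graph f g pos (cbox \<xi> \<eta>) r s"
proof -
  define fy where "fy z = blinfun_apply (f' z) (0, 1)" for z
  have "isCont fy (a, b)"
    using blinfun.continuous_on[OF cont_deriv continuous_on_const, of "(0, 1)"]
    unfolding fy_def[abs_def] continuous_on_eq_continuous_at[OF open_UNIV] by blast
  then obtain \<delta> where "\<delta> > 0" and same_sign: "\<And>z. dist z (a, b) < \<delta> \<Longrightarrow> 0 < fy (a, b) * fy z"
    using dy by (elim isCont_sign_persists) (auto simp: fy_def)
  define \<epsilon> where "\<epsilon> = \<delta> / 3"
  have "\<epsilon> > 0"
    using \<open>\<delta> > 0\<close> by (simp add: \<epsilon>_def)
  obtain \<rho>1 where "\<rho>1 > 0" and g_close: "\<And>x. dist x a < \<rho>1 \<Longrightarrow> dist (g x) b < \<epsilon>"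
    using cont_g \<open>\<epsilon> > 0\<close> g_at unfolding continuous_on_eq_continuous_at[OF open_UNIV] continuous_at_eps_delta
    by blast
  obtain U where "open U" "a \<in> U" and U: "\<And>x. x \<in> U \<Longrightarrow> f x (g x) = 0"
    using g_impl by blast
  then obtain \<rho>2 where "\<rho>2 > 0" "ball a \<rho>2 \<subseteq> U"
    using open_contains_ball by blast
  define \<rho> where "\<rho> = min \<epsilon> (min \<rho>1 \<rho>2)"
  have "\<rho> > 0"
    using \<open>\<epsilon> > 0\<close> \<open>\<rho>1 > 0\<close> \<open>\<rho>2 > 0\<close> by (simp add: \<rho>_def)
  then obtain \<xi> \<eta> :: "real^'n" where lt: "\<forall>k. \<xi> $ k < \<eta> $ k" and a_in: "a \<in> cbox \<xi> \<eta>"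
    and box: "cbox \<xi> \<eta> \<subseteq> ball a \<rho>"
    by (rule cbox_cart_in_ball)
  have near: "dist (x, t) (a, b) < \<delta>" if "x \<in> cbox \<xi> \<eta>" "t \<in> {b - \<epsilon>..b + \<epsilon>}" for x t
  proof -
    have "dist x a < \<rho>"
      using box that(1) by (auto simp: dist_commute)
    have "dist (x, t) (a, b) \<le> dist x a + dist t b"
      using norm_Pair_le[of "x - a" "t - b"] by (simp add: dist_norm)
    also have "\<dots> < \<delta>"
      using \<open>dist x a < \<rho>\<close> that(2) by (auto simp: \<rho>_def \<epsilon>_def dist_real_def)
    finally show ?thesis .
  qed
  have root: "b - \<epsilon> < g x \<and> g x < b + \<epsilon> \<and> f x (g x) = 0" if "x \<in> cbox \<xi> \<eta>" for x
  proof -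
    have "dist x a < \<rho>"
      using box that by (auto simp: dist_commute)
    then show ?thesis
      using g_close[of x] U \<open>ball a \<rho>2 \<subseteq> U\<close> by (auto simp: \<rho>_def dist_real_def dist_commute)
  qed
  show ?thesis
  proof (rule that[OF lt a_in, of "b - \<epsilon>" "b + \<epsilon>" "0 < fy (a, b)"])
    show "b - \<epsilon> < b + \<epsilon>" "b \<in> {b - \<epsilon>..b + \<epsilon>}"
      using \<open>\<epsilon> > 0\<close> by auto
    show "sign_changes_at_graph f g (0 < fy (a, b)) (cbox \<xi> \<eta>) (b - \<epsilon>) (b + \<epsilon>)"
      using near same_sign root
      by (intro sign_changes_at_graph_if_partial_sign[where fy = "\<lambda>x t. fy (x, t)"])
        (auto simp: fy_def intro: has_real_derivative_partial_snd[OF deriv])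
  qed
qed

lemma continuous_on_poly_eval: "continuous_on UNIV (poly_eval p)"
  unfolding poly_eval_def by (intro continuous_intros)

theorem corollary3p3:
  fixes f :: "real^'n \<Rightarrow> real \<Rightarrow> real"
    and f' :: "((real^'n) \<times> real) \<Rightarrow> ((real^'n) \<times> real) \<Rightarrow>\<^sub>L real"
    and a :: "real^'n" and b :: real
    and p :: "('n \<Rightarrow> nat) \<Rightarrow> real"
  assumes deriv: "\<And>z. ((\<lambda>z. f (fst z) (snd z)) has_derivative blinfun_apply (f' z)) (at z)"
    and cont_deriv: "continuous_on UNIV f'"
    and zero: "f a b = 0"
    and dy: "blinfun_apply (f' (a, b)) (0, 1) \<noteq> 0"
    and fin: "finite {\<beta>. p \<beta> \<noteq> 0}"
    and g_at: "poly_eval p a = b"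
    and g_impl: "\<exists>U. open U \<and> a \<in> U \<and> (\<forall>x\<in>U. f x (poly_eval p x) = 0)"
  shows "\<exists>\<xi> \<eta> :: real^'n. \<exists>r s :: real.
           (\<forall>k. \<xi> $ k < \<eta> $ k) \<and> a \<in> cbox \<xi> \<eta> \<and> r < s \<and> b \<in> {r..s} \<and>
           assumption1 f (cbox \<xi> \<eta>) {r..s} \<and>
           (\<forall>x\<in>cbox \<xi> \<eta>. n_y f {r..s} x = n_y f {r..s} a) \<and>
           (\<forall>N :: 'n \<Rightarrow> nat. (\<forall>k. deg_in p k < N k) \<longrightarrow>
              (\<forall>x. poly_eval p x =
                 (\<Sum>\<beta>\<in>{\<beta>. \<forall>k. \<beta> k \<le> N k - 1}.
                    c_beta f (n_y f {r..s} a) {r..s} a \<xi> \<eta> N \<beta> *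
                    (\<Prod>k\<in>UNIV. (x $ k - a $ k) ^ \<beta> k))))"
proof -
  obtain \<xi> \<eta> :: "real^'n" and r s pos where lt: "\<forall>k. \<xi> $ k < \<eta> $ k" and a_in: "a \<in> cbox \<xi> \<eta>"
    and rs: "r < s" "b \<in> {r..s}" and graph: "sign_changes_at_graph f (poly_eval p) pos (cbox \<xi> \<eta>) r s"
    using implicit_function_sign_box[OF deriv cont_deriv dy continuous_on_poly_eval g_at g_impl] .
  have n_y: "n_y f {r..s} x = (if pos then 1 else -1)" if "x \<in> cbox \<xi> \<eta>" for x
    using sign_y_at_graph(2)[OF graph that] .
  have jumps: "assumption1 f (cbox \<xi> \<eta>) {r..s}"
    using sign_y_at_graph(1)[OF graph] by (simp add: assumption1_def)
  have "\<forall>k. \<xi> $ k \<le> \<eta> $ k"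
    using lt by (simp add: less_imp_le)
  then have d: "d_alpha f (n_y f {r..s} a) {r..s} \<xi> \<eta> N \<alpha> = integral (R_alpha \<xi> \<eta> N \<alpha>) (poly_eval p)"
    if "\<forall>k. 1 \<le> \<alpha> k \<and> \<alpha> k \<le> N k" for N \<alpha>
    unfolding n_y[OF a_in] using d_alpha_eq_integral[OF _ that continuous_on_poly_eval graph] by blast
  show ?thesis
    using lt a_in rs jumps n_y poly_eval_eq_sum_c_beta[OF lt fin _ d]
    by (intro exI[of _ \<xi>] exI[of _ \<eta>] exI[of _ r] exI[of _ s] conjI) auto
qed

end
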